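(* Every almost reciprocal Puiseux monoid satisfies the ascending chain condition on principal ideals (ACCP).
   Context: A Puiseux monoid is an additive submonoid of $(\mathbb{Q}_{\ge 0},+)$. An almost reciprocal Puiseux monoid is a monoid of the form $\langle \frac{c_n}{d_n} \mid n \in \mathbb{N} \rangle$, where $(d_n)_{n\ge 1}$ is a strictly increasing sequence of positive integers whose terms are pairwise relatively prime, and $(c_n)_{n \ge 1}$ is a sequence of positive integers with $\gcd(c_n,d_n)=1$ for every $n$. A principal ideal of a monoid $M$ is a set $r + M = \{r+q \mid q \in M\}$ with $r \in M$; $M$ satisfies the ACCP if every ascending chain $r_1 + M \subseteq r_2 + M \subseteq \cdots$ of principal ideals is eventually constant. *)

theory Defs
  imports Main "HOL.Rat"
begin

inductive_set submonoid_gen :: "rat set \<Rightarrow> rat set" for A :: "rat set" where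
  zero: "0 \<in> submonoid_gen A"
| gen: "a \<in> A \<Longrightarrow> a \<in> submonoid_gen A"
| add: "x \<in> submonoid_gen A \<Longrightarrow> y \<in> submonoid_gen A \<Longrightarrow> x + y \<in> submonoid_gen A"

definition principal_ideal :: "rat set \<Rightarrow> rat \<Rightarrow> rat set" where
  "principal_ideal M r = {r + q | q. q \<in> M}"

definition ACCP :: "rat set \<Rightarrow> bool" where
  "ACCP M \<longleftrightarrow> (\<forall>r :: nat \<Rightarrow> rat.
      (\<forall>n. r n \<in> M) \<and> (\<forall>n. principal_ideal M (r n) \<subseteq> principal_ideal M (r (Suc n)))
      \<longrightarrow> (\<exists>N. \<forall>n\<ge>N. principal_ideal M (r n) = principal_ideal M (r N)))"

text \<open>Almost reciprocal Puiseux monoid with numerators c and denominators d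
  (sequences indexed from 0 instead of 1).\<close>
definition almost_reciprocal_PM :: "(nat \<Rightarrow> nat) \<Rightarrow> (nat \<Rightarrow> nat) \<Rightarrow> rat set" where
  "almost_reciprocal_PM c d = submonoid_gen (range (\<lambda>n. of_nat (c n) / of_nat (d n)))"

end

theory Submission
  imports Defs "HOL-Library.Multiset"
begin

(*
  Let r_0 + M \<subseteq> r_1 + M \<subseteq> ... and write r_n = r_(n+1) + q_n with q_n \<in> M.
  Then r_0 = r_m + q_0 + ... + q_(m-1), so any finitely many atoms c_j/d_j occurring in
  the q_k occur together in one factorization of r_0. Let b be the denominator of r_0.
  For d_j coprime to b, partial fractions with the pairwise coprime d_i force d_j to
  divide the multiplicity of c_j/d_j in that factorization, so the atom contributes at
  least c_j \<ge> 1 to r_0. As only finitely many d_j share a factor with b, only finitely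
  many atoms occur in the q_k at all. Their minimum bounds every nonzero q_k from below,
  and the q_k sum to at most r_0, so almost all of them vanish.
*)

lemma image_sum_mset_multiplicity:
  "(\<Sum>x\<in>#M. f x) = (\<Sum>x\<in>set_mset M. of_nat (count M x) * f x :: 'b::comm_semiring_1)"
proof (induction M)
  case (add x M)
  have "(\<Sum>y\<in>set_mset (add_mset x M). of_nat (count (add_mset x M) y) * f y)
      = f x + (\<Sum>y\<in>set_mset M. of_nat (count M y) * f y)"
  proof (cases "x \<in># M")
    case True
    have "(\<Sum>y\<in>set_mset M. of_nat (count (add_mset x M) y) * f y)
        = (\<Sum>y\<in>set_mset M. of_nat (count M y) * f y + (if y = x then f y else 0))"
      by (intro sum.cong) (auto simp: algebra_simps)
    with True show ?thesis
      by (simp add: insert_absorb sum.distrib add.commute)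
  next
    case False
    then have "(\<Sum>y\<in>set_mset M. of_nat (count (add_mset x M) y) * f y)
        = (\<Sum>y\<in>set_mset M. of_nat (count M y) * f y)"
      by (intro sum.cong) auto
    with False show ?thesis
      by (simp add: not_in_iff)
  qed
  with add.IH show ?case by simp
qed simp

lemma sum_count_le_sum_mset:
  fixes f :: "'a \<Rightarrow> 'b::linordered_semidom"
  assumes "\<And>x. x \<in># M \<Longrightarrow> 0 \<le> f x" and "T \<subseteq> set_mset M"
  shows "(\<Sum>x\<in>T. of_nat (count M x) * f x) \<le> (\<Sum>x\<in>#M. f x)"
  unfolding image_sum_mset_multiplicity[of f M]
  using assms by (intro sum_mono2) auto

lemma sum_mset_nonneg:
  fixes f :: "'a \<Rightarrow> 'b::ordered_comm_monoid_add"
  assumes "\<And>x. x \<in># M \<Longrightarrow> 0 \<le> f x"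
  shows "0 \<le> (\<Sum>x\<in>#M. f x)"
  using assms by (induction M) simp_all

lemma finite_if_card_subsets_bounded:
  fixes B :: "'b::archimedean_field"
  assumes "\<And>T. finite T \<Longrightarrow> T \<subseteq> A \<Longrightarrow> of_nat (card T) \<le> B"
  shows "finite A"
proof (rule ccontr)
  assume "infinite A"
  obtain n :: nat where "B < of_nat n"
    using reals_Archimedean2 by blast
  moreover obtain T where "finite T" "card T = n" "T \<subseteq> A"
    using infinite_arbitrarily_large[OF \<open>infinite A\<close>] by blast
  ultimately show False
    using assms by fastforce
qed

lemma finite_subset_UN_lessThan:
  assumes "finite T" and "T \<subseteq> (\<Union>k. A k)"
  shows "\<exists>m::nat. T \<subseteq> (\<Union>k<m. A k)"
  using assms
proof (induction T rule: finite_induct)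
  case (insert x T)
  then obtain m k where "T \<subseteq> (\<Union>k<m. A k)" and "x \<in> A k"
    by blast
  then have "insert x T \<subseteq> (\<Union>i<max m (Suc k). A i)"
    by fastforce
  then show ?case ..
qed simp

lemma rat_mult_denominator_Ints:
  fixes x :: rat
  obtains b :: nat where "0 < b" and "x * of_nat b \<in> \<int>"
proof -
  obtain a b where "quotient_of x = (a, b)"
    by fastforce
  then have "0 < b" and "x = of_int a / of_int b"
    by (simp_all add: quotient_of_denom_pos quotient_of_div)
  then have "0 < nat b" and "x * of_nat (nat b) = of_int a"
    by simp_all
  then show ?thesis
    using that by (metis Ints_of_int)
qed

lemma dvd_numerator_if_sum_fractions_Ints:
  fixes a d :: "'i \<Rightarrow> nat"
  assumes "finite F" and "j \<in> F" and "\<And>i. i \<in> F \<Longrightarrow> 0 < d i"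
    and "\<And>i k. i \<in> F \<Longrightarrow> k \<in> F \<Longrightarrow> i \<noteq> k \<Longrightarrow> coprime (d i) (d k)"
    and "(\<Sum>i\<in>F. of_nat (a i) / of_nat (d i) :: rat) \<in> \<int>"
  shows "d j dvd a j"
proof -
  define P where "P i = (\<Prod>k\<in>F - {i}. d k)" for i
  have d_P: "d i * P i = (\<Prod>k\<in>F. d k)" if "i \<in> F" for i
    using that \<open>finite F\<close> by (simp add: P_def prod.remove)
  obtain z where z: "(\<Sum>i\<in>F. of_nat (a i) / of_nat (d i) :: rat) = of_int z"
    using assms(5) Ints_cases by blast
  have "(of_nat (a i * P i) :: rat) = of_nat (a i) / of_nat (d i) * of_nat (\<Prod>k\<in>F. d k)"
    if "i \<in> F" for i
    using assms(3)[OF that] by (simp flip: d_P[OF that])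
  then have "(of_nat (\<Sum>i\<in>F. a i * P i) :: rat)
      = (\<Sum>i\<in>F. of_nat (a i) / of_nat (d i) * of_nat (\<Prod>k\<in>F. d k))"
    by simp
  also have "\<dots> = of_int (z * int (\<Prod>k\<in>F. d k))"
    by (simp only: sum_distrib_right[symmetric] z) simp
  finally have "int (\<Sum>i\<in>F. a i * P i) = z * int (\<Prod>k\<in>F. d k)"
    by (metis of_int_eq_iff of_int_of_nat_eq)
  moreover have "d j dvd (\<Prod>k\<in>F. d k)"
    using assms(1,2) by (rule dvd_prodI)
  ultimately have "d j dvd (\<Sum>i\<in>F. a i * P i)"
    by (metis dvd_mult int_dvd_int_iff)
  moreover have "d j dvd (\<Sum>i\<in>F - {j}. a i * P i)"
    using assms(1,2) by (intro dvd_sum dvd_mult) (auto simp: P_def)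
  ultimately have "d j dvd a j * P j"
    using assms(1,2) by (simp add: sum.remove dvd_add_left_iff)
  moreover have "coprime (d j) (P j)"
    unfolding P_def using assms(2,4) by (intro prod_coprime_right) auto
  ultimately show ?thesis
    by (simp add: coprime_dvd_mult_left_iff)
qed

lemma finite_not_coprime_if_pairwise_coprime:
  fixes d :: "'i \<Rightarrow> nat"
  assumes "\<And>i k. i \<noteq> k \<Longrightarrow> coprime (d i) (d k)" and "0 < b"
  shows "finite {i. \<not> coprime (d i) b}"
proof -
  let ?S = "{i. \<not> coprime (d i) b}"
  have "inj_on (\<lambda>i. gcd (d i) b) ?S"
  proof (rule inj_onI)
    fix i k
    assume "i \<in> ?S" and eq: "gcd (d i) b = gcd (d k) b"
    have "gcd (d i) b dvd d k"
      unfolding eq by simp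
    moreover have "\<not> is_unit (gcd (d i) b)"
      using \<open>i \<in> ?S\<close> by (simp add: coprime_iff_gcd_eq_1)
    ultimately show "i = k"
      using assms(1) coprime_common_divisor gcd_dvd1 by blast
  qed
  moreover have "(\<lambda>i. gcd (d i) b) ` ?S \<subseteq> {x. x dvd b}"
    by auto
  then have "finite ((\<lambda>i. gcd (d i) b) ` ?S)"
    using finite_divisors_nat[OF \<open>0 < b\<close>] by (rule finite_subset)
  ultimately show ?thesis
    by (rule finite_imageD[rotated])
qed

lemma submonoid_gen_range_sum_mset:
  assumes "x \<in> submonoid_gen (range g)"
  shows "\<exists>X. x = (\<Sum>i\<in>#X. g i)"
  using assms
proof (induction rule: submonoid_gen.induct)
  case zero
  show ?case
    by (metis sum_mset.empty image_mset_empty)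
next
  case (gen a)
  then obtain i where "a = g i"
    by blast
  then have "a = (\<Sum>j\<in>#{#i#}. g j)"
    by simp
  then show ?case ..
next
  case (add x y)
  then obtain X Y where "x = (\<Sum>i\<in>#X. g i)" and "y = (\<Sum>i\<in>#Y. g i)"
    by blast
  then have "x + y = (\<Sum>i\<in>#X + Y. g i)"
    by simp
  then show ?case ..
qed

lemma ACCP_if_differences_eventually_zero:
  assumes "0 \<in> M"
    and "\<And>r q. (\<And>n. r n \<in> M) \<Longrightarrow> (\<And>n. q n \<in> M) \<Longrightarrow> (\<And>n. r n = r (Suc n) + q n)
      \<Longrightarrow> \<exists>N. \<forall>n\<ge>N. q n = 0"
  shows "ACCP M"
  unfolding ACCP_def
proof (intro allI impI)
  fix r :: "nat \<Rightarrow> rat"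
  assume "(\<forall>n. r n \<in> M) \<and> (\<forall>n. principal_ideal M (r n) \<subseteq> principal_ideal M (r (Suc n)))"
  then have r_mem: "\<And>n. r n \<in> M" and incl: "\<And>n. principal_ideal M (r n) \<subseteq> principal_ideal M (r (Suc n))"
    by blast+
  have "r n \<in> principal_ideal M (r (Suc n))" for n
    using incl[of n] \<open>0 \<in> M\<close> by (force simp: principal_ideal_def)
  then have "\<forall>n. \<exists>q. q \<in> M \<and> r n = r (Suc n) + q"
    by (auto simp: principal_ideal_def)
  then obtain q where "\<And>n. q n \<in> M" and r_step: "\<And>n. r n = r (Suc n) + q n"
    by metis
  then obtain N where N: "\<forall>n\<ge>N. q n = 0"
    using assms(2) r_mem r_step by blast
  have "r n = r N" if "N \<le> n" for n
    using that
  proof (induction n rule: dec_induct)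
    case (step n)
    then show ?case
      using N r_step[of n] by simp
  qed simp
  then show "\<exists>N. \<forall>n\<ge>N. principal_ideal M (r n) = principal_ideal M (r N)"
    by metis
qed

lemma card_coprime_support_le_sum_mset:
  fixes c d :: "'i \<Rightarrow> nat" and X :: "'i multiset"
  assumes d_pos: "\<And>i. 0 < d i" and d_coprime: "\<And>i k. i \<noteq> k \<Longrightarrow> coprime (d i) (d k)"
    and c_pos: "\<And>i. 0 < c i" and cd_coprime: "\<And>i. coprime (c i) (d i)"
    and "(\<Sum>i\<in>#X. of_nat (c i) / of_nat (d i)) * of_nat b \<in> (\<int> :: rat set)"
  shows "of_nat (card {j \<in> set_mset X. coprime (d j) b})
    \<le> (\<Sum>i\<in>#X. of_nat (c i) / of_nat (d i) :: rat)"
proof -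
  let ?g = "\<lambda>i. of_nat (c i) / of_nat (d i) :: rat"
  let ?F = "{j \<in> set_mset X. coprime (d j) b}"
  have Ints: "(\<Sum>i\<in>set_mset X. of_nat (count X i * c i * b) / of_nat (d i) :: rat) \<in> \<int>"
    using assms(5) by (simp add: image_sum_mset_multiplicity sum_distrib_right)
  have one_le: "1 \<le> of_nat (count X j) * ?g j" if "j \<in> ?F" for j
  proof -
    have "d j dvd count X j * c j * b"
      using d_pos d_coprime that by (intro dvd_numerator_if_sum_fractions_Ints[OF _ _ _ _ Ints]) auto
    then have "d j dvd count X j"
      using that cd_coprime by (simp add: coprime_dvd_mult_left_iff coprime_commute)
    then have "d j \<le> count X j"
      using that by (auto intro: dvd_imp_le)
    then have "of_nat (d j) * ?g j \<le> of_nat (count X j) * ?g j"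
      by (intro mult_right_mono) auto
    moreover have "of_nat (d j) * ?g j = of_nat (c j)"
      using d_pos[of j] by simp
    moreover have "(1 :: rat) \<le> of_nat (c j)"
      using c_pos[of j] by simp
    ultimately show ?thesis
      by linarith
  qed
  have "of_nat (card ?F) = (\<Sum>j\<in>?F. 1 :: rat)"
    by simp
  also have "\<dots> \<le> (\<Sum>j\<in>?F. of_nat (count X j) * ?g j)"
    by (rule sum_mono) (rule one_le)
  also have "\<dots> \<le> (\<Sum>i\<in>#X. ?g i)"
    by (rule sum_count_le_sum_mset) auto
  finally show ?thesis .
qed

lemma finite_summand_support_if_representations:
  fixes c d :: "'i \<Rightarrow> nat" and Q :: "nat \<Rightarrow> 'i multiset" and x :: rat
  assumes d_pos: "\<And>i. 0 < d i" and d_coprime: "\<And>i k. i \<noteq> k \<Longrightarrow> coprime (d i) (d k)"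
    and c_pos: "\<And>i. 0 < c i" and cd_coprime: "\<And>i. coprime (c i) (d i)"
    and "0 < b" and x_Ints: "x * of_nat b \<in> \<int>"
    and repr: "\<And>m. \<exists>X. (\<Sum>k<m. Q k) \<subseteq># X \<and> x = (\<Sum>i\<in>#X. of_nat (c i) / of_nat (d i))"
  shows "finite (\<Union>k. set_mset (Q k))"
proof -
  let ?S = "{i. \<not> coprime (d i) b}"
  have "finite ((\<Union>k. set_mset (Q k)) - ?S)"
  proof (rule finite_if_card_subsets_bounded[where B = x])
    fix T
    assume "finite T" and T: "T \<subseteq> (\<Union>k. set_mset (Q k)) - ?S"
    then obtain m where "T \<subseteq> (\<Union>k<m. set_mset (Q k))"
      using finite_subset_UN_lessThan by (metis Diff_subset subset_trans)
    moreover obtain X where "(\<Sum>k<m. Q k) \<subseteq># X" and x: "x = (\<Sum>i\<in>#X. of_nat (c i) / of_nat (d i))"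
      using repr by blast
    ultimately have "T \<subseteq> {j \<in> set_mset X. coprime (d j) b}"
      using T by (fastforce simp: set_mset_sum dest: mset_subset_eqD)
    then have "of_nat (card T) \<le> (of_nat (card {j \<in> set_mset X. coprime (d j) b}) :: rat)"
      by (simp add: card_mono)
    also have "\<dots> \<le> x"
      using x_Ints unfolding x by (intro card_coprime_support_le_sum_mset d_pos d_coprime c_pos cd_coprime)
    finally show "of_nat (card T) \<le> x" .
  qed
  moreover have "finite ?S"
    using d_coprime \<open>0 < b\<close> by (rule finite_not_coprime_if_pairwise_coprime)
  ultimately show ?thesis
    by simp
qed

lemma summands_eventually_empty_if_finite_support:
  fixes g :: "'i \<Rightarrow> 'b::archimedean_field" and Q :: "nat \<Rightarrow> 'i multiset"
  assumes "finite (\<Union>k. set_mset (Q k))" and g_pos: "\<And>i. 0 < g i"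
    and bounded: "\<And>m. (\<Sum>k<m. \<Sum>i\<in>#Q k. g i) \<le> B"
  shows "\<exists>N. \<forall>n\<ge>N. Q n = {#}"
proof -
  \<comment> \<open>The extra 1 only guards against an empty support.\<close>
  define e where "e = Min (insert 1 (g ` (\<Union>k. set_mset (Q k))))"
  have "0 < e"
    using assms(1) g_pos by (simp add: e_def)
  have sum_nonneg: "0 \<le> (\<Sum>i\<in>#Y. g i)" for Y
    by (rule sum_mset_nonneg) (simp add: g_pos less_imp_le)
  have e_le: "e \<le> (\<Sum>i\<in>#Q k. g i)" if nonempty: "Q k \<noteq> {#}" for k
  proof -
    obtain j Y where Qk: "Q k = add_mset j Y"
      using multi_nonempty_split[OF nonempty] by blast
    then have "j \<in># Q k"
      by simp
    then have "e \<le> g j"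
      using assms(1) unfolding e_def by (intro Min_le) auto
    also have "\<dots> \<le> (\<Sum>i\<in>#Q k. g i)"
      using sum_nonneg[of Y] by (simp add: Qk)
    finally show ?thesis .
  qed
  have "finite {k. Q k \<noteq> {#}}"
  proof (rule finite_if_card_subsets_bounded[where B = "B / e"])
    fix K
    assume "finite K" and K: "K \<subseteq> {k. Q k \<noteq> {#}}"
    then obtain m where "K \<subseteq> {..<m}"
      by (auto simp: finite_nat_set_iff_bounded)
    have "of_nat (card K) * e = (\<Sum>k\<in>K. e)"
      by simp
    also have "\<dots> \<le> (\<Sum>k\<in>K. \<Sum>i\<in>#Q k. g i)"
      using K e_le by (intro sum_mono) auto
    also have "\<dots> \<le> (\<Sum>k<m. \<Sum>i\<in>#Q k. g i)"
      using \<open>K \<subseteq> {..<m}\<close> sum_nonneg by (intro sum_mono2) auto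
    also have "\<dots> \<le> B"
      by (rule bounded)
    finally show "of_nat (card K) \<le> B / e"
      using \<open>0 < e\<close> by (simp add: pos_le_divide_eq)
  qed
  then obtain N where "\<forall>n\<in>{k. Q k \<noteq> {#}}. n < N"
    by (auto simp: finite_nat_set_iff_bounded)
  then show ?thesis
    by (auto simp: not_less[symmetric])
qed

lemma almost_reciprocal_PM_differences_eventually_zero:
  fixes c d :: "nat \<Rightarrow> nat" and r q :: "nat \<Rightarrow> rat"
  assumes d_pos: "\<And>n. 0 < d n" and d_coprime: "\<And>m n. m \<noteq> n \<Longrightarrow> coprime (d m) (d n)"
    and c_pos: "\<And>n. 0 < c n" and cd_coprime: "\<And>n. coprime (c n) (d n)"
    and r_mem: "\<And>n. r n \<in> almost_reciprocal_PM c d"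
    and q_mem: "\<And>n. q n \<in> almost_reciprocal_PM c d"
    and r_step: "\<And>n. r n = r (Suc n) + q n"
  shows "\<exists>N. \<forall>n\<ge>N. q n = 0"
proof -
  let ?g = "\<lambda>i. of_nat (c i) / of_nat (d i) :: rat"
  have g_pos: "0 < ?g i" for i
    using d_pos c_pos by simp
  have "\<forall>k. \<exists>X. r k = (\<Sum>i\<in>#X. ?g i)"
    using r_mem submonoid_gen_range_sum_mset unfolding almost_reciprocal_PM_def by blast
  then obtain R where R: "\<And>k. r k = (\<Sum>i\<in>#R k. ?g i)"
    by (metis choice)
  have "\<forall>k. \<exists>X. q k = (\<Sum>i\<in>#X. ?g i)"
    using q_mem submonoid_gen_range_sum_mset unfolding almost_reciprocal_PM_def by blast
  then obtain Q where Q: "\<And>k. q k = (\<Sum>i\<in>#Q k. ?g i)"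
    by (metis choice)
  have telescope: "r 0 = r m + (\<Sum>k<m. \<Sum>i\<in>#Q k. ?g i)" for m
  proof (induction m)
    case (Suc m)
    then show ?case
      using r_step[of m] by (simp add: Q)
  qed simp
  have sum_Q: "(\<Sum>i\<in>#(\<Sum>k<m. Q k). ?g i) = (\<Sum>k<m. \<Sum>i\<in>#Q k. ?g i)" for m
    by (induction m) simp_all
  obtain b where b_pos: "0 < b" and b_Ints: "r 0 * of_nat b \<in> \<int>"
    by (rule rat_mult_denominator_Ints)
  have repr: "\<exists>X. (\<Sum>k<m. Q k) \<subseteq># X \<and> r 0 = (\<Sum>i\<in>#X. ?g i)" for m
    using telescope[of m] by (intro exI[of _ "R m + (\<Sum>k<m. Q k)"]) (simp add: R sum_Q)
  have finite_support: "finite (\<Union>k. set_mset (Q k))"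
    by (rule finite_summand_support_if_representations[OF d_pos d_coprime c_pos cd_coprime b_pos b_Ints repr])
  have "0 \<le> r m" for m
    unfolding R by (rule sum_mset_nonneg) (simp add: g_pos less_imp_le)
  then have bounded: "(\<Sum>k<m. \<Sum>i\<in>#Q k. ?g i) \<le> r 0" for m
    using telescope[of m] by (metis le_add_same_cancel2)
  obtain N where "\<forall>n\<ge>N. Q n = {#}"
    using summands_eventually_empty_if_finite_support[OF finite_support g_pos bounded] by blast
  then show ?thesis
    by (intro exI[of _ N]) (simp add: Q)
qed

theorem theorem4p5:
  fixes c d :: "nat \<Rightarrow> nat"
  assumes "\<And>n. 0 < d n"
    and "strict_mono d"
    and "\<And>m n. m \<noteq> n \<Longrightarrow> coprime (d m) (d n)"
    and "\<And>n. 0 < c n"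
    and "\<And>n. coprime (c n) (d n)"
  shows "ACCP (almost_reciprocal_PM c d)"
proof (rule ACCP_if_differences_eventually_zero)
  show "0 \<in> almost_reciprocal_PM c d"
    by (simp add: almost_reciprocal_PM_def submonoid_gen.zero)
qed (rule almost_reciprocal_PM_differences_eventually_zero[OF assms(1,3,4,5)])

end
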